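(* Let $n\geq 2$, $1\leq k\leq n-1$, $w=w_1\cdots w_n\in\mathfrak{S}_n$, and let $i<j$ with $w_i\cdots w_j$ a $k$-up. Let $i\leq i'<j'\leq j$ be such that $w_{i'}\cdots w_{j'}$ is a $k$-up with $j'-i'$ minimal among all $k$-ups $w_{a}\cdots w_{b}$ with $i\le a<b\le j$. Then $w_{i'}\cdots w_{j'}$ is a $k$-ascending section.
   Context: $\mathfrak{S}_n$ is the set of permutations $w=w_1\cdots w_n$ of $\{1,\dots,n\}$. A section of $w$ is a consecutive block $w_sw_{s+1}\cdots w_t$ ($s\le t$). A section $w_s\cdots w_t$ is a $k$-up if $s<t$ and $w_t-w_s\geq k$, and a $k$-down if $s<t$ and $w_s-w_t\geq k$. A $k$-down "in" the section $w_a\cdots w_b$ means a $k$-down $w_s\cdots w_t$ with $a\leq s<t\leq b$. A section $w_i\cdots w_j$ with $i<j$ is $k$-ascending if: $w_i=\min\{w_i,\dots,w_j\}$ and $w_j=\max\{w_i,\dots,w_j\}$; $w_j-w_i\geq k$; and there is no $k$-down in $w_i\cdots w_j$. *)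

theory Defs
  imports Main
begin

(* A permutation w = w_1 ... w_n of {1..n} is a function w :: nat => nat
   (positions 1..n, values outside irrelevant) with w a bijection {1..n} -> {1..n}. *)
definition is_perm :: "nat \<Rightarrow> (nat \<Rightarrow> nat) \<Rightarrow> bool" where
  "is_perm n w \<longleftrightarrow> bij_betw w {1..n} {1..n}"

definition k_up :: "nat \<Rightarrow> (nat \<Rightarrow> nat) \<Rightarrow> nat \<Rightarrow> nat \<Rightarrow> bool" where
  "k_up k w s t \<longleftrightarrow> s < t \<and> int (w t) - int (w s) \<ge> int k"

definition k_down :: "nat \<Rightarrow> (nat \<Rightarrow> nat) \<Rightarrow> nat \<Rightarrow> nat \<Rightarrow> bool" where
  "k_down k w s t \<longleftrightarrow> s < t \<and> int (w s) - int (w t) \<ge> int k"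

definition has_k_down_in :: "nat \<Rightarrow> (nat \<Rightarrow> nat) \<Rightarrow> nat \<Rightarrow> nat \<Rightarrow> bool" where
  "has_k_down_in k w a b \<longleftrightarrow> (\<exists>s t. a \<le> s \<and> s < t \<and> t \<le> b \<and> k_down k w s t)"

definition k_ascending :: "nat \<Rightarrow> (nat \<Rightarrow> nat) \<Rightarrow> nat \<Rightarrow> nat \<Rightarrow> bool" where
  "k_ascending k w i j \<longleftrightarrow> i < j
     \<and> w i = Min (w ` {i..j}) \<and> w j = Max (w ` {i..j})
     \<and> int (w j) - int (w i) \<ge> int k
     \<and> \<not> has_k_down_in k w i j"

end

theory Submission
  imports Defs
begin

text \<open>If some
  \<open>w\<^sub>m\<close> inside were below \<open>w\<^sub>s\<close> (or above \<open>w\<^sub>t\<close>), then \<open>w\<^sub>m \<cdots> w\<^sub>t\<close>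
  (or \<open>w\<^sub>s \<cdots> w\<^sub>m\<close>) would be a shorter \<open>k\<close>-up; and for a \<open>k\<close>-down \<open>w\<^sub>a \<cdots> w\<^sub>b\<close>
  inside, \<open>w\<^sub>a \<ge> w\<^sub>b + k \<ge> w\<^sub>s + k\<close> makes \<open>w\<^sub>s \<cdots> w\<^sub>a\<close> a shorter \<open>k\<close>-up.\<close>

definition minimal_k_up :: "nat \<Rightarrow> (nat \<Rightarrow> nat) \<Rightarrow> nat \<Rightarrow> nat \<Rightarrow> bool" where
  "minimal_k_up k w s t \<longleftrightarrow> k_up k w s t \<and>
     (\<forall>a b. s \<le> a \<longrightarrow> b \<le> t \<longrightarrow> b - a < t - s \<longrightarrow> \<not> k_up k w a b)"

lemma minimal_k_upD:
  assumes "minimal_k_up k w s t" and "s \<le> a" and "b \<le> t" and "b - a < t - s"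
  shows "\<not> k_up k w a b"
  using assms unfolding minimal_k_up_def by blast

lemma minimal_k_up_imp_k_up: "minimal_k_up k w s t \<Longrightarrow> k_up k w s t"
  unfolding minimal_k_up_def by blast

lemma minimal_k_up_Min:
  assumes "minimal_k_up k w s t" and "m \<in> {s..t}"
  shows "w s \<le> w m"
proof (rule ccontr)
  assume less: "\<not> w s \<le> w m"
  have up: "s < t" "int k \<le> int (w t) - int (w s)"
    using minimal_k_up_imp_k_up[OF assms(1)] by (auto simp: k_up_def)
  with less assms(2) have "s < m" "m < t"
    by (auto simp: le_less)
  with less up have "k_up k w m t"
    unfolding k_up_def by linarith
  moreover have "t - m < t - s"
    using \<open>s < m\<close> \<open>m < t\<close> by simp
  ultimately show False
    using minimal_k_upD[OF assms(1)] \<open>s < m\<close> by simp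
qed

lemma minimal_k_up_Max:
  assumes "minimal_k_up k w s t" and "m \<in> {s..t}"
  shows "w m \<le> w t"
proof (rule ccontr)
  assume greater: "\<not> w m \<le> w t"
  have up: "s < t" "int k \<le> int (w t) - int (w s)"
    using minimal_k_up_imp_k_up[OF assms(1)] by (auto simp: k_up_def)
  with greater assms(2) have "s < m" "m < t"
    by (auto simp: le_less)
  with greater up have "k_up k w s m"
    unfolding k_up_def by linarith
  moreover have "m - s < t - s"
    using \<open>s < m\<close> \<open>m < t\<close> by simp
  ultimately show False
    using minimal_k_upD[OF assms(1)] \<open>m < t\<close> by simp
qed

lemma minimal_k_up_no_k_down:
  assumes "minimal_k_up k w s t" and "1 \<le> k"
  shows "\<not> has_k_down_in k w s t"
proof
  assume "has_k_down_in k w s t"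
  then obtain a b where ab: "s \<le> a" "a < b" "b \<le> t" "k_down k w a b"
    unfolding has_k_down_in_def by blast
  have "w s \<le> w b"
    using minimal_k_up_Min[OF assms(1)] ab by auto
  with ab assms(2) have "int k \<le> int (w a) - int (w s)"
    by (auto simp: k_down_def)
  moreover from this assms(2) have "s < a"
    using ab(1) by (cases "s = a") auto
  ultimately have "k_up k w s a"
    by (simp add: k_up_def)
  moreover have "a - s < t - s"
    using \<open>s < a\<close> ab by simp
  ultimately show False
    using minimal_k_upD[OF assms(1)] ab by simp
qed

lemma minimal_k_up_imp_k_ascending:
  assumes "minimal_k_up k w s t" and "1 \<le> k"
  shows "k_ascending k w s t"
proof -
  have "s < t" and up: "int (w t) - int (w s) \<ge> int k"
    using assms(1) by (auto simp: minimal_k_up_def k_up_def)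
  have "w s = Min (w ` {s..t})"
    by (rule Min_eqI[symmetric]) (use minimal_k_up_Min[OF assms(1)] \<open>s < t\<close> in auto)
  moreover have "w t = Max (w ` {s..t})"
    by (rule Max_eqI[symmetric]) (use minimal_k_up_Max[OF assms(1)] \<open>s < t\<close> in auto)
  ultimately show ?thesis
    using \<open>s < t\<close> up minimal_k_up_no_k_down[OF assms]
    unfolding k_ascending_def by blast
qed

theorem lemma2p5:
  fixes n k i j i' j' :: nat and w :: "nat \<Rightarrow> nat"
  assumes "n \<ge> 2" and "1 \<le> k" and "k \<le> n - 1"
    and "is_perm n w"
    and "1 \<le> i" and "i < j" and "j \<le> n"
    and "k_up k w i j"
    and "i \<le> i'" and "i' < j'" and "j' \<le> j"
    and "k_up k w i' j'"
    and "\<And>a b. i \<le> a \<Longrightarrow> a < b \<Longrightarrow> b \<le> j \<Longrightarrow> k_up k w a b \<Longrightarrow> j' - i' \<le> b - a"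
  shows "k_ascending k w i' j'"
proof -
  have "minimal_k_up k w i' j'"
    unfolding minimal_k_up_def
  proof (intro conjI allI impI)
    fix a b assume "i' \<le> a" "b \<le> j'" "b - a < j' - i'"
    show "\<not> k_up k w a b"
    proof
      assume "k_up k w a b"
      then have "j' - i' \<le> b - a"
        using assms(9,11,13) \<open>i' \<le> a\<close> \<open>b \<le> j'\<close> by (simp add: k_up_def)
      with \<open>b - a < j' - i'\<close> show False by simp
    qed
  qed (fact assms(12))
  then show ?thesis
    using minimal_k_up_imp_k_ascending assms(2) by blast
qed

end
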